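(* Let $\Psi,\Lambda,\Upsilon$ and $\delta$ be as in the context, put $\bar\Lambda=\Lambda(\bar U,\vec0,0,0)$, and let $\{\bar U^\varepsilon\}\subseteq\mathbb R^n$ with $\bar U^\varepsilon\to\bar U$ as $\varepsilon\to0^+$. If $\delta$ is sufficiently small, there exist constants $c_V,\theta,c_W\in(0,1)$ independent of $\varepsilon$ such that for every sufficiently small $\varepsilon>0$ and every $\bar W_{cs}\in\mathbb R^k$ with $|\bar W_{cs}|\le\theta\delta$, the system $$V^\varepsilon(\zeta)=\bar U^\varepsilon+\int_{\delta/\varepsilon}^{\zeta}\Psi\big(V^\varepsilon(y),W^\varepsilon_{cs}(y),\varepsilon y,\varepsilon\big)W^\varepsilon_{cs}(y)\,dy,$$ $$W^\varepsilon_{cs}(\zeta)=e^{\bar\Lambda\zeta-\varepsilon\zeta^2I_k/2}\bar W_{cs}+\int_0^\zeta e^{\bar\Lambda(\zeta-y)-\varepsilon\zeta^2I_k/2+\varepsilon y^2I_k/2}\Big\{\big[\Lambda(\cdot)-\bar\Lambda\big]-\varepsilon y\big[\Upsilon(\cdot)-I_k\big]\Big\}W^\varepsilon_{cs}(y)\,dy,$$ where $(\cdot)=\big(V^\varepsilon(y),W^\varepsilon_{cs}(y),\varepsilon y,\varepsilon\big)$, admits a unique continuous solution $(V^\varepsilon,W^\varepsilon_{cs})$ on $[0,\delta/\varepsilon]$ satisfying, for every $\zeta\in[0,\delta/\varepsilon]$, $$|V^\varepsilon(\zeta)-\bar U|\le c_V\delta,\qquad |W^\varepsilon_{cs}(\zeta)|\le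 c_W e^{-c\zeta/2}\delta.$$
   Context: $A:\mathbb R^n\to\mathbb R^{n\times n}$ smooth and strictly hyperbolic with eigenvalues satisfying $\lambda_1(U)<\dots<\lambda_k(U)<-c<0<c<\lambda_{k+1}(U)<\dots<\lambda_n(U)$ for all $U$ (some $1\le k\le n-1$, $c>0$). $\bar U\in\mathbb R^n$ is fixed. $\Psi(V,W_{cs},\xi,\varepsilon)\in\mathbb R^{n\times k}$, $\Lambda(V,W_{cs},\xi,\varepsilon)\in\mathbb R^{k\times k}$, $\Upsilon(V,W_{cs},\xi,\varepsilon)\in\mathbb R^{k\times k}$ are smooth functions defined for $|V-\bar U|\le\delta$, $|W_{cs}|\le\delta$, $|\xi|\le\delta$, $|\varepsilon|\le\delta$, with $\Lambda(\bar U,\vec0,0,0)=\mathrm{Diag}(\lambda_1(\bar U),\dots,\lambda_k(\bar U))$ and $\Upsilon(\bar U,\vec0,0,0)=I_k$; they are the coefficients of the reduction $V'=\Psi W_{cs}$, $W_{cs}'=(\Lambda-\xi\Upsilon)W_{cs}$, $\xi'=\varepsilon$, $\varepsilon'=0$ of the self-similar viscous profile system to a center-stable manifold about $(\bar U,\vec0,0,0)$ (Lemma 3.1). *)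

theory Defs
  imports "HOL-Analysis.Analysis"
begin

primrec matpow :: "real^'k^'k \<Rightarrow> nat \<Rightarrow> real^'k^'k" where
  "matpow M 0 = mat 1"
| "matpow M (Suc m) = M ** matpow M m"

definition mexp :: "real^'k^'k \<Rightarrow> real^'k^'k" where
  "mexp M = (\<Sum>m. (1 / fact m) *\<^sub>R matpow M m)"

definition diag_mat :: "('k \<Rightarrow> real) \<Rightarrow> real^'k^'k" where
  "diag_mat d = (\<chi> i j. if i = j then d i else 0)"

(* C^\<infinity> on an open set S: f lies in a family of functions, each differentiable and
   continuous on S, which is closed under taking directional derivatives in every direction *)
definition smooth_on :: "'a::real_normed_vector set \<Rightarrow> ('a \<Rightarrow> 'b::real_normed_vector) \<Rightarrow> bool" where
  "smooth_on S f \<longleftrightarrow> (\<exists>F. f \<in> F \<and>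
     (\<forall>g\<in>F. continuous_on S g \<and> (\<forall>x\<in>S. g differentiable (at x)) \<and>
        (\<forall>v. (\<lambda>x. frechet_derivative g (at x) v) \<in> F)))"

definition real_eigenvalues :: "real^'n^'n \<Rightarrow> real set" where
  "real_eigenvalues M = {l. \<exists>v. v \<noteq> 0 \<and> M *v v = l *\<^sub>R v}"

definition hyperbolic_gap :: "real^'n^'n \<Rightarrow> 'k itself \<Rightarrow> real \<Rightarrow> bool" where
  "hyperbolic_gap M _ c \<longleftrightarrow>
     card (real_eigenvalues M) = CARD('n) \<and>
     card {l\<in>real_eigenvalues M. l < -c} = CARD('k) \<and>
     (\<forall>l\<in>real_eigenvalues M. l < -c \<or> c < l) \<and>
     (\<exists>l\<in>real_eigenvalues M. c < l)"

end

theory Submission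
  imports Defs
begin

(*
  The integral system is a fixed-point equation (V, W) = T (V, W) for pairs of
  continuous functions on [0, L], L = \<delta>/\<epsilon>.  W is measured in the exponentially
  weighted norm sup |W y| e^(c y/2): the fixed-point space stores W y / weight y as a
  bounded continuous function.  Since the stable eigenvalues d i lie below -c, the
  propagator of the linearised W-equation decays like e^(-c (\<zeta> - y)); combined with
  Lipschitz bounds for \<Psi>, \<Lambda>, \<Upsilon> on a compact box (a consequence of smoothness),
  this shows that for small \<delta> the map T sends a closed set S into itself and is a
  1/2-contraction there.  Banach's fixed point theorem gives a unique fixed point,
  and solutions of the system obeying the stated bounds are exactly its fixed points.
*)


lemma diag_mat_nth [simp]: "diag_mat a $ i $ j = (if i = j then a i else 0)"
  by (simp add: diag_mat_def)

lemma diag_mat_mult_vec: "diag_mat a *v v = (\<chi> i. a i * v $ i)"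
proof -
  have "(\<Sum>j\<in>UNIV. (if i = j then a i else 0) * v $ j) = a i * v $ i" for i
    by (simp add: if_distrib[of "\<lambda>x. x * _"] cong: if_cong)
  then show ?thesis by (simp add: vec_eq_iff matrix_vector_mult_def)
qed

lemma diag_mat_mult_diag_mat: "diag_mat a ** diag_mat b = diag_mat (\<lambda>i. a i * b i)"
proof -
  have "(\<Sum>k\<in>UNIV. (if i = k then a i else 0) * (if k = j then b k else 0))
        = (if i = j then a i * b i else 0)" for i j
    by (simp add: if_distrib[of "\<lambda>x. x * _"] cong: if_cong)
  then show ?thesis by (simp add: vec_eq_iff matrix_matrix_mult_def)
qed

lemma matpow_diag_mat: "matpow (diag_mat a) m = diag_mat (\<lambda>i. a i ^ m)"
proof (induction m)
  case 0
  show ?case by (simp add: vec_eq_iff mat_def)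
next
  case (Suc m)
  then show ?case by (simp add: diag_mat_mult_diag_mat)
qed

lemma mexp_diag_mat: "mexp (diag_mat a) = diag_mat (\<lambda>i. exp (a i))"
proof -
  have "(\<lambda>m. (1 / fact m) *\<^sub>R matpow (diag_mat a) m) sums diag_mat (\<lambda>i. exp (a i))"
    unfolding sums_def
  proof (rule vec_tendstoI, rule vec_tendstoI)
    fix i j
    show "((\<lambda>N. (\<Sum>m<N. (1 / fact m) *\<^sub>R matpow (diag_mat a) m) $ i $ j)
            \<longlonglongrightarrow> diag_mat (\<lambda>i. exp (a i)) $ i $ j)"
    proof (cases "i = j")
      case True
      have "(\<lambda>m. a i ^ m /\<^sub>R fact m) sums exp (a i)" by (rule exp_converges)
      then show ?thesis
        using True by (simp add: matpow_diag_mat sums_def divide_inverse mult.commute)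
    qed (simp add: matpow_diag_mat)
  qed
  then show ?thesis unfolding mexp_def by (rule sums_unique[symmetric])
qed

lemma norm_diag_mat_mult_le:
  assumes "\<And>i. \<bar>a i\<bar> \<le> B"
  shows "norm (diag_mat a *v (v :: real^'k)) \<le> B * norm v"
proof -
  have B: "0 \<le> B" using assms[of undefined] by linarith
  have "norm (diag_mat a *v v) = L2_set (\<lambda>i. \<bar>a i * v $ i\<bar>) UNIV"
    by (simp add: diag_mat_mult_vec norm_vec_def)
  also have "\<dots> \<le> L2_set (\<lambda>i. B * \<bar>v $ i\<bar>) UNIV"
    by (rule L2_set_mono) (auto simp: abs_mult intro!: mult_right_mono assms)
  also have "\<dots> = B * norm v"
    by (simp add: norm_vec_def L2_set_right_distrib[OF B])
  finally show ?thesis .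
qed

(* The Frobenius norm of a matrix bounds its operator norm (Cauchy-Schwarz row by row). *)
lemma norm_matrix_vector_le:
  fixes A :: "real^'n^'m"
  shows "norm (A *v x) \<le> norm A * norm x"
proof -
  have "norm (A *v x) = L2_set (\<lambda>i. \<bar>A $ i \<bullet> x\<bar>) UNIV"
    by (simp add: norm_vec_def matrix_mult_dot)
  also have "\<dots> \<le> L2_set (\<lambda>i. norm (A $ i) * norm x) UNIV"
    by (rule L2_set_mono) (simp_all add: Cauchy_Schwarz_ineq2)
  also have "\<dots> = norm A * norm x"
    by (simp add: norm_vec_def L2_set_left_distrib)
  finally show ?thesis .
qed

lemma norm_matrix_vector_diff_le:
  fixes A B :: "real^'n^'m"
  shows "norm (A *v x - B *v y) \<le> norm (A - B) * norm x + norm B * norm (x - y)"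
proof -
  have "A *v x - B *v y = (A - B) *v x + B *v (x - y)"
    by (simp add: matrix_vector_mult_diff_rdistrib matrix_vector_mult_diff_distrib)
  then show ?thesis
    by (metis add_mono norm_matrix_vector_le norm_triangle_le)
qed

lemma continuous_on_if_const [continuous_intros]:
  "continuous_on S f \<Longrightarrow> continuous_on S g \<Longrightarrow> continuous_on S (\<lambda>x. if P then f x else g x)"
  by (cases P) auto

lemma continuous_on_matrix_vector_mult:
  fixes A :: "real \<Rightarrow> real^'m^'n"
  assumes "continuous_on S A" "continuous_on S v"
  shows "continuous_on S (\<lambda>y. A y *v v y)"
  unfolding matrix_vector_mult_def by (intro continuous_intros assms)


lemma has_integral_exp_decay:
  assumes c: "(c::real) > 0" and ab: "a \<le> b"
  shows "((\<lambda>y. exp (- c * y / 2)) has_integral (2 / c) * (exp (- c * a / 2) - exp (- c * b / 2))) {a..b}"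
proof -
  have "((\<lambda>y. - (2 / c) * exp (- c * y / 2)) has_vector_derivative exp (- c * y / 2)) (at y within {a..b})" for y
    unfolding has_real_derivative_iff_has_vector_derivative[symmetric]
    using c by (auto intro!: derivative_eq_intros simp: field_simps)
  from fundamental_theorem_of_calculus[OF ab this]
  show ?thesis by (simp add: algebra_simps)
qed

lemma has_integral_exp_kernel:
  assumes c: "(c::real) > 0" and z: "0 \<le> z"
  shows "((\<lambda>y. exp (- c * (z - y) / 2)) has_integral (2 / c) * (1 - exp (- c * z / 2))) {0..z}"
proof -
  have "((\<lambda>y. (2 / c) * exp (- c * (z - y) / 2)) has_vector_derivative exp (- c * (z - y) / 2)) (at y within {0..z})" for y
    unfolding has_real_derivative_iff_has_vector_derivative[symmetric]
    using c by (auto intro!: derivative_eq_intros simp: field_simps)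
  from fundamental_theorem_of_calculus[OF z this]
  show ?thesis by (simp add: algebra_simps)
qed

lemma integral_exp_decay_bound:
  fixes f :: "real \<Rightarrow> 'a::euclidean_space"
  assumes c: "c > 0" and ab: "a \<le> b" and a: "0 \<le> a" and K: "0 \<le> K"
    and f: "continuous_on {a..b} f"
    and le: "\<And>y. y \<in> {a..b} \<Longrightarrow> norm (f y) \<le> K * exp (- c * y / 2)"
  shows "norm (integral {a..b} f) \<le> K * (2 / c)"
proof -
  let ?I = "(2 / c) * (exp (- c * a / 2) - exp (- c * b / 2))"
  have g: "((\<lambda>y. K * exp (- c * y / 2)) has_integral K * ?I) {a..b}"
    by (rule has_integral_mult_right[OF has_integral_exp_decay[OF c ab]])
  have "norm (integral {a..b} f) \<le> K * ?I"
    using integral_norm_bound_integral[OF integrable_continuous_interval[OF f]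
        has_integral_integrable[OF g] le] integral_unique[OF g] by simp
  also have "\<dots> \<le> K * (2 / c)"
  proof -
    have "exp (- c * a / 2) \<le> 1" using c a by simp
    then have "exp (- c * a / 2) - exp (- c * b / 2) \<le> 1"
      using exp_gt_zero[of "- c * b / 2"] by linarith
    then have "?I \<le> 2 / c" using c by (intro mult_left_le) auto
    then show ?thesis using K by (rule mult_left_mono)
  qed
  finally show ?thesis .
qed

lemma integral_exp_kernel_bound:
  fixes f :: "real \<Rightarrow> 'a::euclidean_space"
  assumes c: "c > 0" and z: "0 \<le> z" and K: "0 \<le> K"
    and f: "continuous_on {0..z} f"
    and le: "\<And>y. y \<in> {0..z} \<Longrightarrow> norm (f y) \<le> K * exp (- c * (z - y) / 2)"
  shows "norm (integral {0..z} f) \<le> K * (2 / c)"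
proof -
  let ?I = "(2 / c) * (1 - exp (- c * z / 2))"
  have g: "((\<lambda>y. K * exp (- c * (z - y) / 2)) has_integral K * ?I) {0..z}"
    by (rule has_integral_mult_right[OF has_integral_exp_kernel[OF c z]])
  have "norm (integral {0..z} f) \<le> K * ?I"
    using integral_norm_bound_integral[OF integrable_continuous_interval[OF f]
        has_integral_integrable[OF g] le] integral_unique[OF g] by simp
  also have "\<dots> \<le> K * (2 / c)"
  proof -
    have "1 - exp (- c * z / 2) \<le> 1" using exp_gt_zero[of "- c * z / 2"] by linarith
    then have "?I \<le> 2 / c" using c by (intro mult_left_le) auto
    then show ?thesis using K by (rule mult_left_mono)
  qed
  finally show ?thesis .
qed


(* Smooth functions are continuous, and Lipschitz on compact convex subsets: the
   directional derivatives are continuous, hence bounded on the compact set, which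
   bounds the operator norm of the derivative; then apply the mean value inequality. *)

lemma smooth_on_continuous_on:
  assumes "smooth_on D f" "K \<subseteq> D"
  shows "continuous_on K f"
  using assms unfolding smooth_on_def by (meson continuous_on_subset)

lemma onorm_le_sum_Basis:
  fixes f :: "'a::euclidean_space \<Rightarrow> 'b::real_normed_vector"
  assumes lin: "linear f" and B: "\<And>b. norm (f b) \<le> B b"
  shows "onorm f \<le> (\<Sum>b\<in>Basis. B b)"
proof (rule onorm_le)
  fix h :: 'a
  have "f h = f (\<Sum>b\<in>Basis. (h \<bullet> b) *\<^sub>R b)"
    by (simp add: euclidean_representation)
  also have "\<dots> = (\<Sum>b\<in>Basis. (h \<bullet> b) *\<^sub>R f b)"
    by (simp add: linear_sum[OF lin] linear_scale[OF lin])
  finally have "norm (f h) \<le> (\<Sum>b\<in>Basis. norm ((h \<bullet> b) *\<^sub>R f b))"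
    using norm_sum by metis
  also have "\<dots> \<le> (\<Sum>b\<in>Basis. norm h * B b)"
  proof (rule sum_mono)
    fix b :: 'a assume b: "b \<in> Basis"
    have "\<bar>h \<bullet> b\<bar> * norm (f b) \<le> norm h * B b"
      by (rule mult_mono[OF Basis_le_norm[OF b] B]) (auto intro: order_trans[OF norm_ge_zero B])
    then show "norm ((h \<bullet> b) *\<^sub>R f b) \<le> norm h * B b" by simp
  qed
  finally show "norm (f h) \<le> (\<Sum>b\<in>Basis. B b) * norm h"
    by (simp add: sum_distrib_left mult.commute)
qed

lemma smooth_on_derivative_bounded:
  fixes f :: "'a::euclidean_space \<Rightarrow> 'b::real_normed_vector"
  assumes sm: "smooth_on D f" and KD: "K \<subseteq> D" and cK: "compact K"
  shows "\<exists>B. \<forall>x\<in>K. (f has_derivative frechet_derivative f (at x)) (at x within K) \<and>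
                    onorm (frechet_derivative f (at x)) \<le> B"
proof -
  obtain F where fF: "f \<in> F" and H: "\<And>g. g \<in> F \<Longrightarrow> continuous_on D g \<and>
      (\<forall>x\<in>D. g differentiable (at x)) \<and> (\<forall>v. (\<lambda>x. frechet_derivative g (at x) v) \<in> F)"
    using sm unfolding smooth_on_def by blast
  have "\<exists>Bb. \<forall>x\<in>K. norm (frechet_derivative f (at x) b) \<le> Bb" for b
  proof -
    have "(\<lambda>x. frechet_derivative f (at x) b) \<in> F" using H[OF fF] by blast
    then have "continuous_on K (\<lambda>x. frechet_derivative f (at x) b)"
      using H KD continuous_on_subset by blast
    then have "bounded ((\<lambda>x. frechet_derivative f (at x) b) ` K)"
      using cK compact_continuous_image compact_imp_bounded by blast
    then show ?thesis unfolding bounded_iff by blast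
  qed
  then obtain Bf where Bf: "\<And>b x. x \<in> K \<Longrightarrow> norm (frechet_derivative f (at x) b) \<le> Bf b"
    by metis
  have der: "(f has_derivative frechet_derivative f (at x)) (at x within K)" if "x \<in> K" for x
  proof -
    have "f differentiable (at x)" using H[OF fF] KD that by blast
    then show ?thesis by (simp add: frechet_derivative_works has_derivative_at_withinI)
  qed
  have "onorm (frechet_derivative f (at x)) \<le> (\<Sum>b\<in>Basis. Bf b)" if x: "x \<in> K" for x
    using der[OF x] Bf[OF x] by (intro onorm_le_sum_Basis has_derivative_linear)
  then show ?thesis using der by blast
qed

lemma smooth_on_lipschitz:
  fixes f :: "'a::euclidean_space \<Rightarrow> 'b::real_normed_vector"
  assumes "smooth_on D f" "K \<subseteq> D" "compact K" and vK: "convex K"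
  shows "\<exists>B. \<forall>x\<in>K. \<forall>y\<in>K. norm (f x - f y) \<le> B * norm (x - y)"
proof -
  obtain B where der: "\<And>x. x \<in> K \<Longrightarrow> (f has_derivative frechet_derivative f (at x)) (at x within K)"
    and bnd: "\<And>x. x \<in> K \<Longrightarrow> onorm (frechet_derivative f (at x)) \<le> B"
    using smooth_on_derivative_bounded[OF assms(1-3)] by blast
  show ?thesis using differentiable_bound[OF vK der bnd] by blast
qed


definition in_box :: "real^'n \<Rightarrow> real \<Rightarrow> real^'n \<Rightarrow> real^'k \<Rightarrow> real \<Rightarrow> real \<Rightarrow> bool" where
  "in_box Ub r V W \<xi> e \<longleftrightarrow> norm (V - Ub) \<le> r \<and> norm W \<le> r \<and> \<bar>\<xi>\<bar> \<le> r \<and> \<bar>e\<bar> \<le> r"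

definition coef_box :: "real^'n \<Rightarrow> real \<Rightarrow> ((real^'n) \<times> (real^'k) \<times> real \<times> real) set" where
  "coef_box Ub r = {(V, W, \<xi>, e). in_box Ub r V W \<xi> e}"

lemma coef_box_eq: "coef_box Ub r = cball Ub r \<times> cball 0 r \<times> cball 0 r \<times> cball 0 r"
  by (auto simp: coef_box_def in_box_def dist_norm norm_minus_commute)

lemma norm_quadruple_le: "norm (a, b, x, e) \<le> norm a + norm b + \<bar>x\<bar> + \<bar>e::real\<bar>"
proof -
  have "norm (a, b, x, e) \<le> norm a + norm (b, x, e)" by (rule norm_Pair_le)
  also have "norm (b, x, e) \<le> norm b + norm (x, e)" by (rule norm_Pair_le)
  also have "norm (x, e) \<le> norm x + norm e" by (rule norm_Pair_le)
  finally show ?thesis by simp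
qed

definition lipschitz_coef ::
  "real^'n \<Rightarrow> real \<Rightarrow> real \<Rightarrow> (real^'n \<Rightarrow> real^'k \<Rightarrow> real \<Rightarrow> real \<Rightarrow> real^'a^'b) \<Rightarrow> bool" where
  "lipschitz_coef Ub r B F \<longleftrightarrow>
     (\<forall>V1 W1 \<xi>1 e1 V2 W2 \<xi>2 e2. in_box Ub r V1 W1 \<xi>1 e1 \<longrightarrow> in_box Ub r V2 W2 \<xi>2 e2 \<longrightarrow>
        norm (F V1 W1 \<xi>1 e1 - F V2 W2 \<xi>2 e2)
          \<le> B * (norm (V1 - V2) + norm (W1 - W2) + \<bar>\<xi>1 - \<xi>2\<bar> + \<bar>e1 - e2\<bar>))"

lemma lipschitz_coefD:
  "lipschitz_coef Ub r B F \<Longrightarrow> in_box Ub r V1 W1 \<xi>1 e1 \<Longrightarrow> in_box Ub r V2 W2 \<xi>2 e2 \<Longrightarrow>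
   norm (F V1 W1 \<xi>1 e1 - F V2 W2 \<xi>2 e2) \<le> B * (norm (V1 - V2) + norm (W1 - W2) + \<bar>\<xi>1 - \<xi>2\<bar> + \<bar>e1 - e2\<bar>)"
  unfolding lipschitz_coef_def by blast

lemma lipschitz_coef_mono:
  fixes F :: "real^'n \<Rightarrow> real^'k \<Rightarrow> real \<Rightarrow> real \<Rightarrow> real^'a^'b"
  assumes "lipschitz_coef Ub r B F" "B \<le> B'"
  shows "lipschitz_coef Ub r B' F"
  unfolding lipschitz_coef_def
proof (intro allI impI)
  fix V1 V2 :: "real^'n" and W1 W2 :: "real^'k" and \<xi>1 \<xi>2 e1 e2 :: real
  assume "in_box Ub r V1 W1 \<xi>1 e1" "in_box Ub r V2 W2 \<xi>2 e2"
  then have "norm (F V1 W1 \<xi>1 e1 - F V2 W2 \<xi>2 e2)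
      \<le> B * (norm (V1 - V2) + norm (W1 - W2) + \<bar>\<xi>1 - \<xi>2\<bar> + \<bar>e1 - e2\<bar>)"
    by (rule lipschitz_coefD[OF assms(1)])
  also have "\<dots> \<le> B' * (norm (V1 - V2) + norm (W1 - W2) + \<bar>\<xi>1 - \<xi>2\<bar> + \<bar>e1 - e2\<bar>)"
    using assms(2) by (intro mult_right_mono) auto
  finally show "norm (F V1 W1 \<xi>1 e1 - F V2 W2 \<xi>2 e2)
      \<le> B' * (norm (V1 - V2) + norm (W1 - W2) + \<bar>\<xi>1 - \<xi>2\<bar> + \<bar>e1 - e2\<bar>)" .
qed

lemma smooth_lipschitz_coef:
  fixes F :: "real^'n \<Rightarrow> real^'k \<Rightarrow> real \<Rightarrow> real \<Rightarrow> real^'a^'b"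
  assumes sm: "smooth_on D (\<lambda>(V, W, \<xi>, e). F V W \<xi> e)" and sub: "coef_box Ub r \<subseteq> D"
  shows "\<exists>B. lipschitz_coef Ub r B F"
proof -
  have "compact (coef_box Ub r)" "convex (coef_box Ub r)"
    unfolding coef_box_eq by (intro compact_Times compact_cball convex_Times convex_cball)+
  then obtain B where B: "\<forall>x\<in>coef_box Ub r. \<forall>y\<in>coef_box Ub r.
      norm ((\<lambda>(V, W, \<xi>, e). F V W \<xi> e) x - (\<lambda>(V, W, \<xi>, e). F V W \<xi> e) y) \<le> B * norm (x - y)"
    using smooth_on_lipschitz[OF sm sub] by blast
  have "lipschitz_coef Ub r \<bar>B\<bar> F"
    unfolding lipschitz_coef_def
  proof (intro allI impI)
    fix V1 V2 :: "real^'n" and W1 W2 :: "real^'k" and \<xi>1 \<xi>2 e1 e2 :: real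
    assume "in_box Ub r V1 W1 \<xi>1 e1" "in_box Ub r V2 W2 \<xi>2 e2"
    then have "norm (F V1 W1 \<xi>1 e1 - F V2 W2 \<xi>2 e2) \<le> B * norm ((V1, W1, \<xi>1, e1) - (V2, W2, \<xi>2, e2))"
      using B unfolding coef_box_def by force
    also have "\<dots> \<le> \<bar>B\<bar> * (norm (V1 - V2) + norm (W1 - W2) + \<bar>\<xi>1 - \<xi>2\<bar> + \<bar>e1 - e2\<bar>)"
      using norm_quadruple_le[of "V1 - V2" "W1 - W2" "\<xi>1 - \<xi>2" "e1 - e2"]
      by (intro order_trans[OF mult_right_mono[of B "\<bar>B\<bar>"] mult_left_mono]) auto
    finally show "norm (F V1 W1 \<xi>1 e1 - F V2 W2 \<xi>2 e2)
        \<le> \<bar>B\<bar> * (norm (V1 - V2) + norm (W1 - W2) + \<bar>\<xi>1 - \<xi>2\<bar> + \<bar>e1 - e2\<bar>)" .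
  qed
  then show ?thesis by blast
qed

lemma smooth_bounded_coef:
  assumes sm: "smooth_on D (\<lambda>(V, W, \<xi>, e). F V W \<xi> e)" and sub: "coef_box Ub r \<subseteq> D"
  shows "\<exists>M. \<forall>V W \<xi> e. in_box Ub r V W \<xi> e \<longrightarrow> norm (F V W \<xi> e) \<le> M"
proof -
  have "compact (coef_box Ub r)"
    unfolding coef_box_eq by (intro compact_Times compact_cball)
  moreover have "continuous_on (coef_box Ub r) (\<lambda>(V, W, \<xi>, e). F V W \<xi> e)"
    by (rule smooth_on_continuous_on[OF sm sub])
  ultimately have "bounded ((\<lambda>(V, W, \<xi>, e). F V W \<xi> e) ` coef_box Ub r)"
    using compact_continuous_image compact_imp_bounded by blast
  then show ?thesis unfolding bounded_iff coef_box_def by fastforce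
qed

lemma continuous_on_coef_comp:
  assumes F: "continuous_on (coef_box Ub r) (\<lambda>(V, W, \<xi>, e). F V W \<xi> e)"
    and "continuous_on I v" "continuous_on I w" "continuous_on I xi" "continuous_on I ee"
    and inb: "\<And>y. y \<in> I \<Longrightarrow> in_box Ub r (v y) (w y) (xi y) (ee y)"
  shows "continuous_on I (\<lambda>y. F (v y) (w y) (xi y) (ee y))"
proof -
  have "continuous_on I (\<lambda>y. (\<lambda>(V, W, \<xi>, e). F V W \<xi> e) (v y, w y, xi y, ee y))"
    by (rule continuous_on_compose2[OF F]) (auto intro!: continuous_intros assms simp: coef_box_def inb)
  then show ?thesis by simp
qed


lemma apply_Bcontfun_clamp:
  fixes F :: "real \<Rightarrow> 'b::metric_space"
  assumes "continuous_on {a..b} F"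
  shows "apply_bcontfun (Bcontfun (\<lambda>t. F (clamp a b t))) = (\<lambda>t. F (clamp a b t))"
proof -
  have c: "continuous_on (cbox a b) F" using assms by simp
  have "(\<lambda>t. F (clamp a b t)) \<in> bcontfun"
    unfolding bcontfun_def
    by (auto intro!: clamp_continuous_on[OF c] clamp_bounded compact_imp_bounded[OF compact_continuous_image] c)
  then show ?thesis by (rule Bcontfun_inverse)
qed

lemma clamp_real_in: "a \<le> b \<Longrightarrow> clamp a b (t::real) \<in> {a..b}"
  using clamp_in_interval[of a b t] by (simp add: cbox_interval)

lemma clamp_real_cancel: "t \<in> {a..b} \<Longrightarrow> clamp a b (t::real) = t"
  using clamp_cancel_cbox[of t a b] by (simp add: cbox_interval)

lemma isCont_apply_bcontfun: "isCont (\<lambda>f. apply_bcontfun f t) f0"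
  unfolding continuous_at_eps_delta using dist_bounded le_less_trans by blast

lemma continuous_on_apply_bcontfun_at [continuous_intros]:
  "continuous_on S g \<Longrightarrow> continuous_on S (\<lambda>x. apply_bcontfun (g x) t)"
  by (rule continuous_on_compose2[of UNIV "\<lambda>f. apply_bcontfun f t"])
     (auto intro: continuous_at_imp_continuous_on isCont_apply_bcontfun)


lemma stable_eigenvalue_below_gap:
  assumes "hyperbolic_gap M (TYPE('k)) c" "l \<in> real_eigenvalues M" "l < 0" "c > 0"
  shows "l < - c"
  using assms unfolding hyperbolic_gap_def by force


locale profile_coefficients =
  fixes c \<delta>\<^sub>1 Lp M :: real
    and Ubar :: "real^'n"
    and \<Psi> :: "real^'n \<Rightarrow> real^'k \<Rightarrow> real \<Rightarrow> real \<Rightarrow> real^'k^'n"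
    and \<Lambda> :: "real^'n \<Rightarrow> real^'k \<Rightarrow> real \<Rightarrow> real \<Rightarrow> real^'k^'k"
    and \<Upsilon> :: "real^'n \<Rightarrow> real^'k \<Rightarrow> real \<Rightarrow> real \<Rightarrow> real^'k^'k"
    and d :: "'k \<Rightarrow> real"
  assumes c_pos: "c > 0" and \<delta>\<^sub>1_pos: "\<delta>\<^sub>1 > 0" and Lp_ge_1: "Lp \<ge> 1" and M_ge_c: "M \<ge> c"
    and d_below: "\<And>i. d i < - c"
    and \<Lambda>_base: "\<Lambda> Ubar 0 0 0 = diag_mat d" and \<Upsilon>_base: "\<Upsilon> Ubar 0 0 0 = mat 1"
    and \<Psi>_cont: "continuous_on (coef_box Ubar \<delta>\<^sub>1) (\<lambda>(V, W, \<xi>, e). \<Psi> V W \<xi> e)"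
    and \<Lambda>_cont: "continuous_on (coef_box Ubar \<delta>\<^sub>1) (\<lambda>(V, W, \<xi>, e). \<Lambda> V W \<xi> e)"
    and \<Upsilon>_cont: "continuous_on (coef_box Ubar \<delta>\<^sub>1) (\<lambda>(V, W, \<xi>, e). \<Upsilon> V W \<xi> e)"
    and \<Psi>_lip: "lipschitz_coef Ubar \<delta>\<^sub>1 Lp \<Psi>"
    and \<Lambda>_lip: "lipschitz_coef Ubar \<delta>\<^sub>1 Lp \<Lambda>"
    and \<Upsilon>_lip: "lipschitz_coef Ubar \<delta>\<^sub>1 Lp \<Upsilon>"
    and \<Psi>_bounded: "\<And>V W \<xi> e. in_box Ubar \<delta>\<^sub>1 V W \<xi> e \<Longrightarrow> norm (\<Psi> V W \<xi> e) \<le> M"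
begin

definition uniquely_solvable :: "real \<Rightarrow> real \<Rightarrow> real^'n \<Rightarrow> real^'k \<Rightarrow> real \<Rightarrow> real \<Rightarrow> bool" where
  "uniquely_solvable \<delta> \<epsilon> U0 Wbar cV cW \<longleftrightarrow>
    (let \<Lambda>b = \<Lambda> Ubar 0 0 0;
         L = \<delta> / \<epsilon>;
         sol = (\<lambda>(V :: real \<Rightarrow> real^'n) (W :: real \<Rightarrow> real^'k).
           continuous_on {0..L} V \<and> continuous_on {0..L} W \<and>
           (\<forall>\<zeta>\<in>{0..L}.
              V \<zeta> = U0 - integral {\<zeta>..L}
                       (\<lambda>y. \<Psi> (V y) (W y) (\<epsilon> * y) \<epsilon> *v W y)) \<and>
           (\<forall>\<zeta>\<in>{0..L}.
              W \<zeta> = mexp (\<zeta> *\<^sub>R \<Lambda>b - (\<epsilon> * \<zeta>\<^sup>2 / 2) *\<^sub>R mat 1) *v Wbar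
                + integral {0..\<zeta>}
                   (\<lambda>y. mexp ((\<zeta> - y) *\<^sub>R \<Lambda>b - (\<epsilon> * \<zeta>\<^sup>2 / 2) *\<^sub>R mat 1
                               + (\<epsilon> * y\<^sup>2 / 2) *\<^sub>R mat 1)
                      *v (((\<Lambda> (V y) (W y) (\<epsilon> * y) \<epsilon> - \<Lambda>b)
                           - (\<epsilon> * y) *\<^sub>R (\<Upsilon> (V y) (W y) (\<epsilon> * y) \<epsilon> - mat 1))
                          *v W y))) \<and>
           (\<forall>\<zeta>\<in>{0..L}. norm (V \<zeta> - Ubar) \<le> cV * \<delta> \<and>
                          norm (W \<zeta>) \<le> cW * exp (- c * \<zeta> / 2) * \<delta>))
     in (\<exists>V W. sol V W) \<and>
        (\<forall>V1 W1 V2 W2. sol V1 W1 \<and> sol V2 W2 \<longrightarrow>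
           (\<forall>\<zeta>\<in>{0..L}. V1 \<zeta> = V2 \<zeta> \<and> W1 \<zeta> = W2 \<zeta>)))"


(* lam scales the weight of the W-component; cW and \<theta> are the constants of the lemma. *)
definition "lam = 8 * M / c"
definition "cW = min (1/2) (c / (8 * M))"
definition "\<theta> = cW / 2"

lemma M_pos: "M > 0" using M_ge_c c_pos by linarith
lemma lam_ge_8: "lam \<ge> 8" using M_ge_c c_pos by (simp add: lam_def field_simps)
lemma cW_pos: "cW > 0" using M_pos c_pos by (simp add: cW_def)
lemma cW_le_half: "cW \<le> 1/2" by (simp add: cW_def)
lemma \<theta>_pos: "\<theta> > 0" using cW_pos by (simp add: \<theta>_def)
lemma \<theta>_less_1: "\<theta> < 1" using cW_le_half by (simp add: \<theta>_def)

lemma cW_M: "M * cW * (2 / c) \<le> 1/4"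
proof -
  have "M * cW \<le> M * (c / (8 * M))" using M_pos by (intro mult_left_mono) (auto simp: cW_def)
  then show ?thesis using M_pos c_pos by (simp add: field_simps)
qed

lemma lam_M: "M / lam * (2 / c) = 1/4"
  using M_pos c_pos by (simp add: lam_def field_simps)

(* Upper limit for \<delta>: the box must fit in the domain and the nonlinearity be small. *)
definition "\<delta>\<^sub>0 = min \<delta>\<^sub>1 (min 1 (c / (100 * Lp * lam)))"

lemma \<delta>\<^sub>0_pos: "\<delta>\<^sub>0 > 0"
  using \<delta>\<^sub>1_pos c_pos lam_ge_8 Lp_ge_1 by (simp add: \<delta>\<^sub>0_def)

lemma below_\<delta>\<^sub>0:
  assumes "\<delta> < \<delta>\<^sub>0"
  shows "\<delta> \<le> \<delta>\<^sub>1" "\<delta> \<le> 1" "100 * Lp * lam * \<delta> \<le> c"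
proof -
  have "\<delta> \<le> c / (100 * Lp * lam)" using assms by (simp add: \<delta>\<^sub>0_def)
  then show "100 * Lp * lam * \<delta> \<le> c"
    using lam_ge_8 Lp_ge_1 by (simp add: le_divide_eq mult_ac)
qed (use assms in \<open>auto simp: \<delta>\<^sub>0_def\<close>)

end

type_synonym ('n, 'k) profile_pair = "(real \<Rightarrow>\<^sub>C (real^'n)) \<times> (real \<Rightarrow>\<^sub>C (real^'k))"

locale fixed_point_problem = profile_coefficients c \<delta>\<^sub>1 Lp M Ubar \<Psi> \<Lambda> \<Upsilon> d
  for c \<delta>\<^sub>1 Lp M :: real
    and Ubar :: "real^'n"
    and \<Psi> :: "real^'n \<Rightarrow> real^'k \<Rightarrow> real \<Rightarrow> real \<Rightarrow> real^'k^'n"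
    and \<Lambda> :: "real^'n \<Rightarrow> real^'k \<Rightarrow> real \<Rightarrow> real \<Rightarrow> real^'k^'k"
    and \<Upsilon> :: "real^'n \<Rightarrow> real^'k \<Rightarrow> real \<Rightarrow> real \<Rightarrow> real^'k^'k"
    and d :: "'k \<Rightarrow> real" +
  fixes \<delta> \<epsilon> :: real and Wbar :: "real^'k" and U0 :: "real^'n"
  assumes \<delta>_pos: "\<delta> > 0" and \<delta>_le_\<delta>\<^sub>1: "\<delta> \<le> \<delta>\<^sub>1" and \<delta>_le_1: "\<delta> \<le> 1"
    and \<delta>_small: "100 * Lp * lam * \<delta> \<le> c"
    and \<epsilon>_pos: "\<epsilon> > 0" and \<epsilon>_le_\<delta>: "\<epsilon> \<le> \<delta>"
    and U0_close: "norm (U0 - Ubar) \<le> \<delta> / 4"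
    and Wbar_small: "norm Wbar \<le> \<theta> * \<delta>"
begin

definition "L = \<delta> / \<epsilon>"
definition "weight y = exp (- c * y / 2) / lam"

definition Vof :: "('n, 'k) profile_pair \<Rightarrow> real \<Rightarrow> real^'n" where
  "Vof x y = apply_bcontfun (fst x) y"
definition Wof :: "('n, 'k) profile_pair \<Rightarrow> real \<Rightarrow> real^'k" where
  "Wof x y = weight y *\<^sub>R apply_bcontfun (snd x) y"

definition coef :: "(real^'n \<Rightarrow> real^'k \<Rightarrow> real \<Rightarrow> real \<Rightarrow> 'a) \<Rightarrow> ('n, 'k) profile_pair \<Rightarrow> real \<Rightarrow> 'a" where
  "coef F x y = F (Vof x y) (Wof x y) (\<epsilon> * y) \<epsilon>"

definition "flux x y = coef \<Psi> x y *v Wof x y"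
definition "pert x y = (coef \<Lambda> x y - diag_mat d) - (\<epsilon> * y) *\<^sub>R (coef \<Upsilon> x y - mat 1)"
definition "force x y = pert x y *v Wof x y"

(* The propagator of W' = (\<Lambda>(Ubar,0,0,0) - \<epsilon> y) W from y to z, and its factors. *)
definition evol :: "real \<Rightarrow> real \<Rightarrow> real^'k^'k" where
  "evol z y = diag_mat (\<lambda>i. exp ((z - y) * d i - \<epsilon> * z\<^sup>2 / 2 + \<epsilon> * y\<^sup>2 / 2))"
definition evol0 :: "real \<Rightarrow> real^'k^'k" where
  "evol0 z = diag_mat (\<lambda>i. exp (z * d i - \<epsilon> * z\<^sup>2 / 2))"
definition evol_back :: "real \<Rightarrow> real^'k^'k" where
  "evol_back y = diag_mat (\<lambda>i. exp (- y * d i + \<epsilon> * y\<^sup>2 / 2))"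

definition "TV x z = U0 - integral {z..L} (flux x)"
definition "TW x z = evol0 z *v Wbar + integral {0..z} (\<lambda>y. evol z y *v force x y)"

(* The closed set on which T is a contraction: V within \<delta>/2 of Ubar, and
   |W y| \<le> cW \<delta> e^(-c y/2), i.e. the stored function W / weight bounded by lam cW \<delta>. *)
definition S :: "('n, 'k) profile_pair set" where
  "S = {x. \<forall>t\<in>{0..L}. norm (Vof x t - Ubar) \<le> \<delta> / 2 \<and> norm (apply_bcontfun (snd x) t) \<le> lam * cW * \<delta>}"

lemma L_pos: "L > 0" using \<delta>_pos \<epsilon>_pos by (simp add: L_def)

lemma eps_y_le: "y \<in> {0..L} \<Longrightarrow> \<bar>\<epsilon> * y\<bar> \<le> \<delta>"
proof -
  assume y: "y \<in> {0..L}"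
  have "\<epsilon> * y \<le> \<epsilon> * L" using y \<epsilon>_pos by (intro mult_left_mono) auto
  then show ?thesis using y \<epsilon>_pos \<delta>_pos by (simp add: L_def)
qed

lemma weight_pos: "weight y > 0" using lam_ge_8 by (simp add: weight_def)

lemma weight_le: "weight y \<le> exp (- c * y / 2)"
  using lam_ge_8 by (simp add: weight_def divide_le_eq)

lemma Lp_\<delta>_small: "Lp * \<delta> * 800 \<le> c"
proof -
  have "Lp * \<delta> * 8 \<le> Lp * \<delta> * lam" using lam_ge_8 Lp_ge_1 \<delta>_pos by (intro mult_left_mono) auto
  then show ?thesis using \<delta>_small by (simp add: algebra_simps)
qed

lemma Wof_bound:
  assumes "x \<in> S" "y \<in> {0..L}"
  shows "norm (Wof x y) \<le> cW * \<delta> * exp (- c * y / 2)"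
proof -
  have "norm (Wof x y) = weight y * norm (apply_bcontfun (snd x) y)"
    using weight_pos[of y] by (simp add: Wof_def)
  also have "\<dots> \<le> weight y * (lam * cW * \<delta>)"
    using assms weight_pos[of y] unfolding S_def by (intro mult_left_mono) auto
  also have "\<dots> = cW * \<delta> * exp (- c * y / 2)"
    using lam_ge_8 by (simp add: weight_def)
  finally show ?thesis .
qed

lemma Wof_le_\<delta>_exp:
  assumes "x \<in> S" "y \<in> {0..L}"
  shows "norm (Wof x y) \<le> \<delta> * exp (- c * y / 2)"
proof -
  have "cW * \<delta> * exp (- c * y / 2) \<le> 1 * \<delta> * exp (- c * y / 2)"
    using cW_le_half \<delta>_pos by (intro mult_right_mono) auto
  then show ?thesis using Wof_bound[OF assms] by simp
qed

lemma Wof_le_half_\<delta>: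
  assumes "x \<in> S" "y \<in> {0..L}"
  shows "norm (Wof x y) \<le> \<delta> / 2"
proof -
  have "cW * \<delta> * exp (- c * y / 2) \<le> (1/2) * \<delta> * 1"
    using assms c_pos cW_le_half cW_pos \<delta>_pos by (intro mult_mono) auto
  then show ?thesis using Wof_bound[OF assms] by simp
qed

lemma Vof_bound: "x \<in> S \<Longrightarrow> y \<in> {0..L} \<Longrightarrow> norm (Vof x y - Ubar) \<le> \<delta> / 2"
  unfolding S_def by auto

lemma in_box_S:
  assumes "x \<in> S" "y \<in> {0..L}"
  shows "in_box Ubar \<delta>\<^sub>1 (Vof x y) (Wof x y) (\<epsilon> * y) \<epsilon>"
  using Vof_bound[OF assms] Wof_le_half_\<delta>[OF assms] eps_y_le[OF assms(2)] \<delta>_le_\<delta>\<^sub>1 \<epsilon>_le_\<delta> \<epsilon>_pos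
  unfolding in_box_def by auto

lemma in_box_base: "in_box Ubar \<delta>\<^sub>1 Ubar 0 0 0"
  using \<delta>\<^sub>1_pos by (simp add: in_box_def)

lemma Vof_diff: "norm (Vof x1 y - Vof x2 y) \<le> dist x1 x2"
proof -
  have "dist (Vof x1 y) (Vof x2 y) \<le> dist x1 x2"
    unfolding Vof_def using order_trans[OF dist_bounded dist_fst_le] .
  then show ?thesis by (simp only: dist_norm[of "Vof x1 y"])
qed

lemma Wof_diff: "norm (Wof x1 y - Wof x2 y) \<le> weight y * dist x1 x2"
proof -
  have "dist (apply_bcontfun (snd x1) y) (apply_bcontfun (snd x2) y) \<le> dist x1 x2"
    using order_trans[OF dist_bounded dist_snd_le] .
  then have "norm (apply_bcontfun (snd x1) y - apply_bcontfun (snd x2) y) \<le> dist x1 x2"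
    by (simp only: dist_norm[of "apply_bcontfun (snd x1) y"])
  then show ?thesis
    using weight_pos[of y] by (simp add: Wof_def mult_left_mono flip: scaleR_diff_right)
qed

lemma Wof_diff_exp: "norm (Wof x1 y - Wof x2 y) \<le> exp (- c * y / 2) * dist x1 x2"
  using order_trans[OF Wof_diff mult_right_mono[OF weight_le zero_le_dist]] .

lemma coef_near_base:
  assumes F: "lipschitz_coef Ubar \<delta>\<^sub>1 Lp F" and x: "x \<in> S" and y: "y \<in> {0..L}"
  shows "norm (coef F x y - F Ubar 0 0 0) \<le> 3 * Lp * \<delta>"
proof -
  have "norm (coef F x y - F Ubar 0 0 0)
      \<le> Lp * (norm (Vof x y - Ubar) + norm (Wof x y - 0) + \<bar>\<epsilon> * y - 0\<bar> + \<bar>\<epsilon> - 0\<bar>)"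
    unfolding coef_def by (rule lipschitz_coefD[OF F in_box_S[OF x y] in_box_base])
  also have "\<dots> \<le> Lp * (3 * \<delta>)"
    using Vof_bound[OF x y] Wof_le_half_\<delta>[OF x y] eps_y_le[OF y] \<epsilon>_le_\<delta> \<epsilon>_pos Lp_ge_1
    by (intro mult_left_mono) auto
  finally show ?thesis by simp
qed

lemma coef_diff:
  assumes F: "lipschitz_coef Ubar \<delta>\<^sub>1 Lp F" and x1: "x1 \<in> S" and x2: "x2 \<in> S" and y: "y \<in> {0..L}"
  shows "norm (coef F x1 y - coef F x2 y) \<le> 2 * Lp * dist x1 x2"
proof -
  have "exp (- c * y / 2) * dist x1 x2 \<le> 1 * dist x1 x2"
    using y c_pos by (intro mult_right_mono) auto
  then have dW: "norm (Wof x1 y - Wof x2 y) \<le> dist x1 x2"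
    using Wof_diff_exp[of x1 y x2] by linarith
  have "norm (coef F x1 y - coef F x2 y)
      \<le> Lp * (norm (Vof x1 y - Vof x2 y) + norm (Wof x1 y - Wof x2 y) + \<bar>\<epsilon> * y - \<epsilon> * y\<bar> + \<bar>\<epsilon> - \<epsilon>\<bar>)"
    unfolding coef_def by (rule lipschitz_coefD[OF F in_box_S[OF x1 y] in_box_S[OF x2 y]])
  also have "\<dots> \<le> Lp * (2 * dist x1 x2)"
    using dW Vof_diff[of x1 y x2] Lp_ge_1 by (intro mult_left_mono) auto
  finally show ?thesis by simp
qed

lemma pert_bound:
  assumes x: "x \<in> S" and y: "y \<in> {0..L}"
  shows "norm (pert x y) \<le> 6 * Lp * \<delta>"
proof -
  have "norm (pert x y) \<le> norm (coef \<Lambda> x y - \<Lambda> Ubar 0 0 0) + \<bar>\<epsilon> * y\<bar> * norm (coef \<Upsilon> x y - \<Upsilon> Ubar 0 0 0)"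
    unfolding pert_def \<Lambda>_base \<Upsilon>_base by (metis norm_scaleR norm_triangle_ineq4)
  also have "\<dots> \<le> 3 * Lp * \<delta> + 1 * (3 * Lp * \<delta>)"
    using coef_near_base[OF \<Lambda>_lip x y] coef_near_base[OF \<Upsilon>_lip x y] eps_y_le[OF y] \<delta>_le_1
    by (intro add_mono mult_mono) auto
  finally show ?thesis by simp
qed

lemma pert_diff:
  assumes x1: "x1 \<in> S" and x2: "x2 \<in> S" and y: "y \<in> {0..L}"
  shows "norm (pert x1 y - pert x2 y) \<le> 4 * Lp * dist x1 x2"
proof -
  have "pert x1 y - pert x2 y = (coef \<Lambda> x1 y - coef \<Lambda> x2 y) - (\<epsilon> * y) *\<^sub>R (coef \<Upsilon> x1 y - coef \<Upsilon> x2 y)"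
    by (simp add: pert_def algebra_simps)
  then have "norm (pert x1 y - pert x2 y)
      \<le> norm (coef \<Lambda> x1 y - coef \<Lambda> x2 y) + \<bar>\<epsilon> * y\<bar> * norm (coef \<Upsilon> x1 y - coef \<Upsilon> x2 y)"
    by (metis norm_scaleR norm_triangle_ineq4)
  also have "\<dots> \<le> 2 * Lp * dist x1 x2 + 1 * (2 * Lp * dist x1 x2)"
    using coef_diff[OF \<Lambda>_lip x1 x2 y] coef_diff[OF \<Upsilon>_lip x1 x2 y] eps_y_le[OF y] \<delta>_le_1
    by (intro add_mono mult_mono) auto
  finally show ?thesis by simp
qed

lemma flux_bound:
  assumes "x \<in> S" "y \<in> {0..L}"
  shows "norm (flux x y) \<le> M * norm (Wof x y)"
proof -
  have "norm (coef \<Psi> x y) \<le> M" unfolding coef_def by (rule \<Psi>_bounded[OF in_box_S[OF assms]])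
  then show ?thesis
    unfolding flux_def by (rule order_trans[OF norm_matrix_vector_le mult_right_mono]) simp
qed

lemma force_bound:
  assumes "x \<in> S" "y \<in> {0..L}"
  shows "norm (force x y) \<le> 6 * Lp * \<delta> * norm (Wof x y)"
  unfolding force_def by (rule order_trans[OF norm_matrix_vector_le mult_right_mono[OF pert_bound[OF assms]]]) simp

lemma flux_diff:
  assumes x1: "x1 \<in> S" and x2: "x2 \<in> S" and y: "y \<in> {0..L}"
  shows "norm (flux x1 y - flux x2 y) \<le> (2 * Lp * \<delta> + M / lam) * dist x1 x2 * exp (- c * y / 2)"
proof -
  have "norm (flux x1 y - flux x2 y)
      \<le> norm (coef \<Psi> x1 y - coef \<Psi> x2 y) * norm (Wof x1 y) + norm (coef \<Psi> x2 y) * norm (Wof x1 y - Wof x2 y)"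
    unfolding flux_def by (rule norm_matrix_vector_diff_le)
  also have "\<dots> \<le> (2 * Lp * dist x1 x2) * (\<delta> * exp (- c * y / 2)) + M * (weight y * dist x1 x2)"
    using coef_diff[OF \<Psi>_lip x1 x2 y] Wof_le_\<delta>_exp[OF x1 y] Wof_diff[of x1 y x2]
      \<Psi>_bounded[OF in_box_S[OF x2 y]] M_pos Lp_ge_1
    unfolding coef_def by (intro add_mono mult_mono) auto
  also have "\<dots> = (2 * Lp * \<delta> + M / lam) * dist x1 x2 * exp (- c * y / 2)"
    by (simp add: weight_def algebra_simps)
  finally show ?thesis .
qed

lemma force_diff:
  assumes x1: "x1 \<in> S" and x2: "x2 \<in> S" and y: "y \<in> {0..L}"
  shows "norm (force x1 y - force x2 y) \<le> 10 * Lp * \<delta> * dist x1 x2 * exp (- c * y / 2)"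
proof -
  have "norm (force x1 y - force x2 y)
      \<le> norm (pert x1 y - pert x2 y) * norm (Wof x1 y) + norm (pert x2 y) * norm (Wof x1 y - Wof x2 y)"
    unfolding force_def by (rule norm_matrix_vector_diff_le)
  also have "\<dots> \<le> (4 * Lp * dist x1 x2) * (\<delta> * exp (- c * y / 2)) + (6 * Lp * \<delta>) * (exp (- c * y / 2) * dist x1 x2)"
    using pert_diff[OF x1 x2 y] Wof_le_\<delta>_exp[OF x1 y] Wof_diff_exp[of x1 y x2] pert_bound[OF x2 y] Lp_ge_1 \<delta>_pos
    by (intro add_mono mult_mono) auto
  also have "\<dots> = 10 * Lp * \<delta> * dist x1 x2 * exp (- c * y / 2)"
    by (simp add: algebra_simps)
  finally show ?thesis .
qed

lemma continuous_on_Vof: "continuous_on A (Vof x)"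
  unfolding Vof_def by simp

lemma continuous_on_Wof: "continuous_on A (Wof x)"
  unfolding Wof_def weight_def by (intro continuous_intros continuous_on_apply_bcontfun) (use lam_ge_8 in auto)

lemma continuous_on_coef:
  assumes "continuous_on (coef_box Ubar \<delta>\<^sub>1) (\<lambda>(V, W, \<xi>, e). F V W \<xi> e)" "x \<in> S"
  shows "continuous_on {0..L} (coef F x)"
  unfolding coef_def
  by (intro continuous_on_coef_comp[OF assms(1)] continuous_on_Vof continuous_on_Wof
      continuous_intros in_box_S[OF assms(2)])

lemma continuous_on_flux: "x \<in> S \<Longrightarrow> continuous_on {0..L} (flux x)"
  unfolding flux_def
  by (intro continuous_on_matrix_vector_mult continuous_on_coef[OF \<Psi>_cont] continuous_on_Wof)

lemma continuous_on_force: "x \<in> S \<Longrightarrow> continuous_on {0..L} (force x)"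
  unfolding force_def pert_def
  by (intro continuous_on_matrix_vector_mult continuous_on_coef[OF \<Lambda>_cont]
      continuous_on_coef[OF \<Upsilon>_cont] continuous_on_Wof continuous_intros)

(* The propagator decays at rate c because d i < -c and \<epsilon> y\<^sup>2 increases in y. *)

lemma evol_bound:
  assumes "0 \<le> y" "y \<le> z"
  shows "norm (evol z y *v v) \<le> exp (- c * (z - y)) * norm v"
  unfolding evol_def
proof (rule norm_diag_mat_mult_le)
  fix i
  have "(z - y) * d i \<le> (z - y) * (- c)" using assms d_below[of i] by (intro mult_left_mono) auto
  moreover have "\<epsilon> * y\<^sup>2 \<le> \<epsilon> * z\<^sup>2" using assms \<epsilon>_pos by (intro mult_left_mono power_mono) auto
  ultimately show "\<bar>exp ((z - y) * d i - \<epsilon> * z\<^sup>2 / 2 + \<epsilon> * y\<^sup>2 / 2)\<bar> \<le> exp (- c * (z - y))"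
    by (simp add: algebra_simps)
qed

lemma evol0_bound:
  assumes "0 \<le> z"
  shows "norm (evol0 z *v v) \<le> exp (- c * z) * norm v"
  unfolding evol0_def
proof (rule norm_diag_mat_mult_le)
  fix i
  have "z * d i \<le> z * (- c)" using assms d_below[of i] by (intro mult_left_mono) auto
  moreover have "0 \<le> \<epsilon> * z\<^sup>2" using \<epsilon>_pos by simp
  ultimately show "\<bar>exp (z * d i - \<epsilon> * z\<^sup>2 / 2)\<bar> \<le> exp (- c * z)" by (simp add: algebra_simps)
qed

lemma evol_split: "evol z y = evol0 z ** evol_back y"
  unfolding evol_def evol0_def evol_back_def diag_mat_mult_diag_mat
  by (rule arg_cong[where f=diag_mat], rule ext) (simp add: exp_add[symmetric] algebra_simps)

lemma continuous_on_evol0: "continuous_on A evol0"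
  unfolding evol0_def diag_mat_def by (intro continuous_intros) auto

lemma continuous_on_evol_back: "continuous_on A evol_back"
  unfolding evol_back_def diag_mat_def by (intro continuous_intros) auto

lemma continuous_on_evol: "continuous_on A (evol z)"
  unfolding evol_def diag_mat_def by (intro continuous_intros) auto

lemma exp_kernel_split: "exp (- c * (z - y)) * exp (- c * y / 2) = exp (- c * z / 2) * exp (- c * (z - y) / 2)"
  by (simp add: exp_add[symmetric] algebra_simps)

lemma continuous_on_TV: "x \<in> S \<Longrightarrow> continuous_on {0..L} (TV x)"
  unfolding TV_def
  by (intro continuous_intros indefinite_integral_continuous_1' integrable_continuous_interval continuous_on_flux)

lemma TV_bound:
  assumes x: "x \<in> S" and z: "z \<in> {0..L}"
  shows "norm (TV x z - Ubar) \<le> \<delta> / 2"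
proof -
  have "norm (integral {z..L} (flux x)) \<le> (M * cW * \<delta>) * (2 / c)"
  proof (rule integral_exp_decay_bound[OF c_pos])
    fix y assume "y \<in> {z..L}"
    then have y: "y \<in> {0..L}" using z by auto
    show "norm (flux x y) \<le> M * cW * \<delta> * exp (- c * y / 2)"
      using order_trans[OF flux_bound[OF x y] mult_left_mono[OF Wof_bound[OF x y]]] M_pos by simp
  qed (use z M_pos cW_pos \<delta>_pos in \<open>auto intro: continuous_on_subset[OF continuous_on_flux[OF x]]\<close>)
  also have "\<dots> = \<delta> * (M * cW * (2 / c))" by (simp add: mult_ac)
  also have "\<dots> \<le> \<delta> * (1/4)" using cW_M \<delta>_pos by (intro mult_left_mono) auto
  finally have "norm (integral {z..L} (flux x)) \<le> \<delta> / 4" by simp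
  moreover have "TV x z - Ubar = (U0 - Ubar) - integral {z..L} (flux x)" by (simp add: TV_def)
  then have "norm (TV x z - Ubar) \<le> norm (U0 - Ubar) + norm (integral {z..L} (flux x))"
    by (metis norm_triangle_ineq4)
  ultimately show ?thesis using U0_close by linarith
qed

lemma TV_diff:
  assumes x1: "x1 \<in> S" and x2: "x2 \<in> S" and z: "z \<in> {0..L}"
  shows "norm (TV x1 z - TV x2 z) \<le> (4 * Lp * \<delta> / c + 1/4) * dist x1 x2"
proof -
  have c1: "continuous_on {z..L} (flux x1)" and c2: "continuous_on {z..L} (flux x2)"
    using z continuous_on_subset[OF continuous_on_flux[OF x1]] continuous_on_subset[OF continuous_on_flux[OF x2]] by auto
  have "norm (TV x1 z - TV x2 z) = norm (integral {z..L} (\<lambda>y. flux x1 y - flux x2 y))"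
    by (simp add: TV_def integral_diff[OF integrable_continuous_interval[OF c1] integrable_continuous_interval[OF c2]] norm_minus_commute)
  also have "\<dots> \<le> ((2 * Lp * \<delta> + M / lam) * dist x1 x2) * (2 / c)"
    using z flux_diff[OF x1 x2] Lp_ge_1 \<delta>_pos M_pos lam_ge_8
    by (intro integral_exp_decay_bound[OF c_pos] continuous_on_diff c1 c2) auto
  also have "\<dots> = (4 * Lp * \<delta> / c + M / lam * (2 / c)) * dist x1 x2"
    by (simp add: algebra_simps)
  finally show ?thesis by (simp only: lam_M)
qed

lemma TW_factor:
  assumes x: "x \<in> S" and z: "z \<in> {0..L}"
  shows "TW x z = evol0 z *v (Wbar + integral {0..z} (\<lambda>y. evol_back y *v force x y))"
proof -
  have ci: "continuous_on {0..z} (\<lambda>y. evol_back y *v force x y)"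
    using z by (intro continuous_on_matrix_vector_mult continuous_on_evol_back
        continuous_on_subset[OF continuous_on_force[OF x]]) auto
  have "integral {0..z} (\<lambda>y. evol z y *v force x y) = integral {0..z} ((*v) (evol0 z) \<circ> (\<lambda>y. evol_back y *v force x y))"
    by (simp add: evol_split matrix_vector_mul_assoc o_def)
  also have "\<dots> = evol0 z *v integral {0..z} (\<lambda>y. evol_back y *v force x y)"
    by (rule integral_linear[OF integrable_continuous_interval[OF ci]]) simp
  finally show ?thesis unfolding TW_def by (simp add: matrix_vector_right_distrib)
qed

lemma continuous_on_TW:
  assumes x: "x \<in> S"
  shows "continuous_on {0..L} (TW x)"
proof -
  have "continuous_on {0..L} (\<lambda>z. evol0 z *v (Wbar + integral {0..z} (\<lambda>y. evol_back y *v force x y)))"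
    by (intro continuous_on_matrix_vector_mult continuous_on_evol0 continuous_on_add continuous_on_const
        indefinite_integral_continuous_1 integrable_continuous_interval continuous_on_evol_back continuous_on_force x)
  then show ?thesis by (rule continuous_on_eq) (simp add: TW_factor[OF x])
qed

lemma TW_integral_bound:
  assumes x: "x \<in> S" and z: "z \<in> {0..L}"
  shows "norm (integral {0..z} (\<lambda>y. evol z y *v force x y)) \<le> (1/2) * (cW * \<delta> * exp (- c * z / 2))"
proof -
  let ?K = "6 * Lp * \<delta> * (cW * \<delta>) * exp (- c * z / 2)"
  have "norm (integral {0..z} (\<lambda>y. evol z y *v force x y)) \<le> ?K * (2 / c)"
  proof (rule integral_exp_kernel_bound[OF c_pos])
    fix y assume yz: "y \<in> {0..z}"
    then have y: "y \<in> {0..L}" using z by auto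
    have force_y: "norm (force x y) \<le> 6 * Lp * \<delta> * (cW * \<delta> * exp (- c * y / 2))"
      using Lp_ge_1 \<delta>_pos by (intro order_trans[OF force_bound[OF x y] mult_left_mono[OF Wof_bound[OF x y]]]) auto
    have "norm (evol z y *v force x y) \<le> exp (- c * (z - y)) * norm (force x y)"
      using yz by (intro evol_bound) auto
    also have "\<dots> \<le> exp (- c * (z - y)) * (6 * Lp * \<delta> * (cW * \<delta> * exp (- c * y / 2)))"
      by (intro mult_left_mono force_y) simp
    also have "\<dots> = ?K * exp (- c * (z - y) / 2)"
      using exp_kernel_split[of z y] by (simp add: algebra_simps)
    finally show "norm (evol z y *v force x y) \<le> ?K * exp (- c * (z - y) / 2)" .
  qed (use z Lp_ge_1 \<delta>_pos cW_pos in \<open>auto intro!: continuous_on_matrix_vector_mult continuous_on_evol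
        continuous_on_subset[OF continuous_on_force[OF x]]\<close>)
  also have "\<dots> = (Lp * \<delta> * 12 / c) * (cW * \<delta> * exp (- c * z / 2))" by (simp add: algebra_simps)
  also have "\<dots> \<le> (1/2) * (cW * \<delta> * exp (- c * z / 2))"
    using Lp_\<delta>_small c_pos cW_pos \<delta>_pos by (intro mult_right_mono) (auto simp: field_simps)
  finally show ?thesis .
qed

lemma TW_bound:
  assumes x: "x \<in> S" and z: "z \<in> {0..L}"
  shows "norm (TW x z) \<le> cW * \<delta> * exp (- c * z / 2)"
proof -
  have "norm (evol0 z *v Wbar) \<le> exp (- c * z) * norm Wbar" using z by (intro evol0_bound) auto
  also have "\<dots> \<le> exp (- c * z / 2) * (\<theta> * \<delta>)"
    using Wbar_small z c_pos by (intro mult_mono) auto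
  finally have "norm (evol0 z *v Wbar) \<le> (1/2) * (cW * \<delta> * exp (- c * z / 2))"
    by (simp add: \<theta>_def mult_ac)
  moreover have "norm (TW x z) \<le> norm (evol0 z *v Wbar) + norm (integral {0..z} (\<lambda>y. evol z y *v force x y))"
    unfolding TW_def by (rule norm_triangle_ineq)
  ultimately show ?thesis using TW_integral_bound[OF x z] by linarith
qed

lemma TW_diff:
  assumes x1: "x1 \<in> S" and x2: "x2 \<in> S" and z: "z \<in> {0..L}"
  shows "norm (TW x1 z - TW x2 z) \<le> (20 * Lp * \<delta> / c * dist x1 x2) * exp (- c * z / 2)"
proof -
  let ?K = "10 * Lp * \<delta> * dist x1 x2 * exp (- c * z / 2)"
  have c1: "continuous_on {0..z} (\<lambda>y. evol z y *v force x1 y)" and c2: "continuous_on {0..z} (\<lambda>y. evol z y *v force x2 y)"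
    using z by (auto intro!: continuous_on_matrix_vector_mult continuous_on_evol
        continuous_on_subset[OF continuous_on_force[OF x1]] continuous_on_subset[OF continuous_on_force[OF x2]])
  have "TW x1 z - TW x2 z = integral {0..z} (\<lambda>y. evol z y *v (force x1 y - force x2 y))"
    by (simp add: TW_def integral_diff[OF integrable_continuous_interval[OF c1] integrable_continuous_interval[OF c2]]
        matrix_vector_mult_diff_distrib)
  also have "norm \<dots> \<le> ?K * (2 / c)"
  proof (rule integral_exp_kernel_bound[OF c_pos])
    fix y assume yz: "y \<in> {0..z}"
    then have y: "y \<in> {0..L}" using z by auto
    have "norm (evol z y *v (force x1 y - force x2 y)) \<le> exp (- c * (z - y)) * norm (force x1 y - force x2 y)"
      using yz by (intro evol_bound) auto
    also have "\<dots> \<le> exp (- c * (z - y)) * (10 * Lp * \<delta> * dist x1 x2 * exp (- c * y / 2))"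
      by (intro mult_left_mono force_diff[OF x1 x2 y]) simp
    also have "\<dots> = ?K * exp (- c * (z - y) / 2)"
      using exp_kernel_split[of z y] by (simp add: algebra_simps)
    finally show "norm (evol z y *v (force x1 y - force x2 y)) \<le> ?K * exp (- c * (z - y) / 2)" .
  qed (use z Lp_ge_1 \<delta>_pos in \<open>auto intro!: continuous_on_matrix_vector_mult continuous_on_evol continuous_on_diff
        continuous_on_subset[OF continuous_on_force[OF x1]] continuous_on_subset[OF continuous_on_force[OF x2]]\<close>)
  also have "\<dots> = (20 * Lp * \<delta> / c * dist x1 x2) * exp (- c * z / 2)" by (simp add: algebra_simps)
  finally show ?thesis .
qed

definition extend :: "(real \<Rightarrow> 'b::metric_space) \<Rightarrow> real \<Rightarrow>\<^sub>C 'b" where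
  "extend F = Bcontfun (\<lambda>t. F (clamp 0 L t))"

definition encode :: "(real \<Rightarrow> real^'n) \<Rightarrow> (real \<Rightarrow> real^'k) \<Rightarrow> ('n, 'k) profile_pair" where
  "encode V W = (extend V, extend (\<lambda>z. (1 / weight z) *\<^sub>R W z))"

lemma extend_apply: "continuous_on {0..L} F \<Longrightarrow> apply_bcontfun (extend F) t = F (clamp 0 L t)"
  unfolding extend_def by (simp add: apply_Bcontfun_clamp)

lemma clamp_in_0L: "clamp 0 L t \<in> {0..L}"
  using clamp_real_in[of 0 L t] L_pos by simp

lemma extend_apply_in: "continuous_on {0..L} F \<Longrightarrow> t \<in> {0..L} \<Longrightarrow> apply_bcontfun (extend F) t = F t"
  by (simp add: extend_apply clamp_real_cancel)

lemma continuous_on_unweight: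
  fixes W :: "real \<Rightarrow> 'a::real_normed_vector"
  assumes "continuous_on {0..L} W"
  shows "continuous_on {0..L} (\<lambda>z. (1 / weight z) *\<^sub>R W z)"
proof -
  have "continuous_on {0..L} (\<lambda>z. 1 / weight z)"
    unfolding weight_def by (intro continuous_intros) (use lam_ge_8 in auto)
  then show ?thesis using assms by (rule continuous_on_scaleR)
qed

lemma unweight_exp: "(1 / weight z) * (B * exp (- c * z / 2)) = lam * B"
  using lam_ge_8 by (simp add: weight_def field_simps)

lemma encode_components:
  assumes cV: "continuous_on {0..L} V" and cW: "continuous_on {0..L} W" and t: "t \<in> {0..L}"
  shows "Vof (encode V W) t = V t" "Wof (encode V W) t = W t"
  using weight_pos[of t]
  by (simp_all add: encode_def Vof_def Wof_def extend_apply_in[OF cV t]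
      extend_apply_in[OF continuous_on_unweight[OF cW] t])

lemma encode_in_S:
  assumes cV: "continuous_on {0..L} V" and cW: "continuous_on {0..L} W"
    and V: "\<And>t. t \<in> {0..L} \<Longrightarrow> norm (V t - Ubar) \<le> \<delta> / 2"
    and W: "\<And>t. t \<in> {0..L} \<Longrightarrow> norm (W t) \<le> cW * \<delta> * exp (- c * t / 2)"
  shows "encode V W \<in> S"
  unfolding S_def
proof (intro CollectI ballI conjI)
  fix t assume t: "t \<in> {0..L}"
  show "norm (Vof (encode V W) t - Ubar) \<le> \<delta> / 2"
    using V[OF t] encode_components[OF cV cW t] by simp
  have "norm (apply_bcontfun (snd (encode V W)) t) = (1 / weight t) * norm (W t)"
    using weight_pos[of t] by (simp add: encode_def extend_apply_in[OF continuous_on_unweight[OF cW] t])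
  also have "\<dots> \<le> (1 / weight t) * (cW * \<delta> * exp (- c * t / 2))"
    using W[OF t] weight_pos[of t] by (intro mult_left_mono) auto
  also have "\<dots> = lam * (cW * \<delta>)" by (rule unweight_exp)
  finally show "norm (apply_bcontfun (snd (encode V W)) t) \<le> lam * cW * \<delta>"
    by (simp only: mult.assoc)
qed

lemma encode_cong:
  assumes "continuous_on {0..L} V" "continuous_on {0..L} W" "continuous_on {0..L} V'" "continuous_on {0..L} W'"
    and "\<And>t. t \<in> {0..L} \<Longrightarrow> V t = V' t" "\<And>t. t \<in> {0..L} \<Longrightarrow> W t = W' t"
  shows "encode V W = encode V' W'"
proof -
  have "extend V = extend V'"
    by (rule bcontfun_eqI) (simp add: extend_apply assms(1,3) assms(5)[OF clamp_in_0L])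
  moreover have "extend (\<lambda>z. (1 / weight z) *\<^sub>R W z) = extend (\<lambda>z. (1 / weight z) *\<^sub>R W' z)"
    by (rule bcontfun_eqI) (simp add: extend_apply continuous_on_unweight assms(2,4) assms(6)[OF clamp_in_0L])
  ultimately show ?thesis by (simp add: encode_def)
qed

lemma dist_extend_le:
  assumes "continuous_on {0..L} F" "continuous_on {0..L} G"
    and "\<And>t. t \<in> {0..L} \<Longrightarrow> norm (F t - G t) \<le> B"
  shows "dist (extend F) (extend G) \<le> B"
  using assms(3)[OF clamp_in_0L]
  by (intro dist_bound) (simp add: extend_apply[OF assms(1)] extend_apply[OF assms(2)] dist_norm)

lemma dist_encode_le:
  assumes cV: "continuous_on {0..L} V" "continuous_on {0..L} V'"
    and cW: "continuous_on {0..L} W" "continuous_on {0..L} W'"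
    and dV: "\<And>t. t \<in> {0..L} \<Longrightarrow> norm (V t - V' t) \<le> BV"
    and dW: "\<And>t. t \<in> {0..L} \<Longrightarrow> norm (W t - W' t) \<le> BW * exp (- c * t / 2)"
  shows "dist (encode V W) (encode V' W') \<le> BV + lam * BW"
proof -
  have "dist (extend (\<lambda>z. (1 / weight z) *\<^sub>R W z)) (extend (\<lambda>z. (1 / weight z) *\<^sub>R W' z)) \<le> lam * BW"
  proof (rule dist_extend_le[OF continuous_on_unweight[OF cW(1)] continuous_on_unweight[OF cW(2)]])
    fix t assume t: "t \<in> {0..L}"
    have "norm ((1 / weight t) *\<^sub>R W t - (1 / weight t) *\<^sub>R W' t) = (1 / weight t) * norm (W t - W' t)"
      using weight_pos[of t] by (simp flip: scaleR_diff_right)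
    also have "\<dots> \<le> (1 / weight t) * (BW * exp (- c * t / 2))"
      using weight_pos[of t] dW[OF t] by (intro mult_left_mono) auto
    finally show "norm ((1 / weight t) *\<^sub>R W t - (1 / weight t) *\<^sub>R W' t) \<le> lam * BW"
      by (simp only: unweight_exp)
  qed
  moreover have "dist (extend V) (extend V') \<le> BV" by (rule dist_extend_le[OF cV dV])
  moreover have "dist (encode V W) (encode V' W') = sqrt ((dist (extend V) (extend V'))\<^sup>2
      + (dist (extend (\<lambda>z. (1 / weight z) *\<^sub>R W z)) (extend (\<lambda>z. (1 / weight z) *\<^sub>R W' z)))\<^sup>2)"
    unfolding encode_def by (rule dist_Pair_Pair)
  then have "dist (encode V W) (encode V' W') \<le> dist (extend V) (extend V')
      + dist (extend (\<lambda>z. (1 / weight z) *\<^sub>R W z)) (extend (\<lambda>z. (1 / weight z) *\<^sub>R W' z))"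
    by (simp add: sqrt_sum_squares_le_sum)
  ultimately show ?thesis by linarith
qed

definition T :: "('n, 'k) profile_pair \<Rightarrow> ('n, 'k) profile_pair" where
  "T x = encode (TV x) (TW x)"

lemma T_components: "x \<in> S \<Longrightarrow> t \<in> {0..L} \<Longrightarrow> Vof (T x) t = TV x t \<and> Wof (T x) t = TW x t"
  unfolding T_def using encode_components[OF continuous_on_TV continuous_on_TW] by blast

lemma T_in_S: "x \<in> S \<Longrightarrow> T x \<in> S"
  unfolding T_def by (intro encode_in_S continuous_on_TV continuous_on_TW TV_bound TW_bound)

lemma closed_S: "closed S"
proof -
  have "S = (\<Inter>t\<in>{0..L}. {x. norm (apply_bcontfun (fst x) t - Ubar) \<le> \<delta> / 2} \<inter>
                          {x. norm (apply_bcontfun (snd x) t) \<le> lam * cW * \<delta>})"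
    by (auto simp: S_def Vof_def)
  also have "closed \<dots>"
    by (intro closed_INT ballI closed_Int closed_Collect_le continuous_intros)
  finally show ?thesis .
qed

lemma S_nonempty: "(const_bcontfun Ubar, const_bcontfun 0) \<in> S"
  using \<delta>_pos lam_ge_8 cW_pos by (simp add: S_def Vof_def const_bcontfun.rep_eq)

lemma contraction:
  assumes x1: "x1 \<in> S" and x2: "x2 \<in> S"
  shows "dist (T x1) (T x2) \<le> (1/2) * dist x1 x2"
proof -
  have "dist (T x1) (T x2) \<le> (4 * Lp * \<delta> / c + 1/4) * dist x1 x2 + lam * (20 * Lp * \<delta> / c * dist x1 x2)"
    unfolding T_def
    by (rule dist_encode_le[OF continuous_on_TV[OF x1] continuous_on_TV[OF x2] continuous_on_TW[OF x1]
          continuous_on_TW[OF x2] TV_diff[OF x1 x2] TW_diff[OF x1 x2]])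
  also have "\<dots> = (1/4 + Lp * \<delta> * (4 + 20 * lam) / c) * dist x1 x2"
    by (simp add: algebra_simps add_divide_distrib)
  also have "\<dots> \<le> (1/4 + 1/4) * dist x1 x2"
  proof (intro mult_right_mono add_left_mono)
    have "Lp * \<delta> * (4 + 20 * lam) \<le> 24 * (Lp * lam * \<delta>)"
      using lam_ge_8 Lp_ge_1 \<delta>_pos mult_left_mono[of 1 lam "Lp * \<delta>"] by (simp add: algebra_simps)
    then show "Lp * \<delta> * (4 + 20 * lam) / c \<le> 1/4"
      using \<delta>_small c_pos by (simp add: field_simps)
  qed simp
  finally show ?thesis by simp
qed

lemma unique_fixed_point: "\<exists>!x\<in>S. T x = x"
  by (rule Banach_fix[where c="1/2"])
    (use closed_S complete_eq_closed S_nonempty T_in_S contraction in auto)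

definition system_V :: "(real \<Rightarrow> real^'n) \<Rightarrow> (real \<Rightarrow> real^'k) \<Rightarrow> real \<Rightarrow> real^'n" where
  "system_V V W z = U0 - integral {z..L} (\<lambda>y. \<Psi> (V y) (W y) (\<epsilon> * y) \<epsilon> *v W y)"

definition system_W :: "(real \<Rightarrow> real^'n) \<Rightarrow> (real \<Rightarrow> real^'k) \<Rightarrow> real \<Rightarrow> real^'k" where
  "system_W V W z = mexp (z *\<^sub>R \<Lambda> Ubar 0 0 0 - (\<epsilon> * z\<^sup>2 / 2) *\<^sub>R mat 1) *v Wbar
     + integral {0..z}
        (\<lambda>y. mexp ((z - y) *\<^sub>R \<Lambda> Ubar 0 0 0 - (\<epsilon> * z\<^sup>2 / 2) *\<^sub>R mat 1 + (\<epsilon> * y\<^sup>2 / 2) *\<^sub>R mat 1)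
           *v (((\<Lambda> (V y) (W y) (\<epsilon> * y) \<epsilon> - \<Lambda> Ubar 0 0 0)
                - (\<epsilon> * y) *\<^sub>R (\<Upsilon> (V y) (W y) (\<epsilon> * y) \<epsilon> - mat 1)) *v W y))"

definition is_solution :: "(real \<Rightarrow> real^'n) \<Rightarrow> (real \<Rightarrow> real^'k) \<Rightarrow> bool" where
  "is_solution V W \<longleftrightarrow> continuous_on {0..L} V \<and> continuous_on {0..L} W \<and>
   (\<forall>\<zeta>\<in>{0..L}. V \<zeta> = system_V V W \<zeta>) \<and> (\<forall>\<zeta>\<in>{0..L}. W \<zeta> = system_W V W \<zeta>) \<and>
   (\<forall>\<zeta>\<in>{0..L}. norm (V \<zeta> - Ubar) \<le> (1/2) * \<delta> \<and> norm (W \<zeta>) \<le> cW * exp (- c * \<zeta> / 2) * \<delta>)"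

lemma system_cong:
  assumes "\<And>y. y \<in> {0..L} \<Longrightarrow> V y = V' y" "\<And>y. y \<in> {0..L} \<Longrightarrow> W y = W' y" and z: "z \<in> {0..L}"
  shows "system_V V W z = system_V V' W' z" "system_W V W z = system_W V' W' z"
proof -
  have "y \<in> {z..L} \<Longrightarrow> V y = V' y \<and> W y = W' y" "y \<in> {0..z} \<Longrightarrow> V y = V' y \<and> W y = W' y" for y
    using assms by auto
  then show "system_V V W z = system_V V' W' z" "system_W V W z = system_W V' W' z"
    unfolding system_V_def system_W_def by (auto intro!: integral_cong arg_cong2[where f = "(+)"])
qed

lemma mexp_evol0: "mexp (z *\<^sub>R \<Lambda> Ubar 0 0 0 - (\<epsilon> * z\<^sup>2 / 2) *\<^sub>R mat 1) = evol0 z"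
proof -
  have "z *\<^sub>R \<Lambda> Ubar 0 0 0 - (\<epsilon> * z\<^sup>2 / 2) *\<^sub>R mat 1 = diag_mat (\<lambda>i. z * d i - \<epsilon> * z\<^sup>2 / 2)"
    by (simp add: \<Lambda>_base vec_eq_iff mat_def)
  then show ?thesis by (simp add: mexp_diag_mat evol0_def)
qed

lemma mexp_evol:
  "mexp ((z - y) *\<^sub>R \<Lambda> Ubar 0 0 0 - (\<epsilon> * z\<^sup>2 / 2) *\<^sub>R mat 1 + (\<epsilon> * y\<^sup>2 / 2) *\<^sub>R mat 1) = evol z y"
proof -
  have "(z - y) *\<^sub>R \<Lambda> Ubar 0 0 0 - (\<epsilon> * z\<^sup>2 / 2) *\<^sub>R mat 1 + (\<epsilon> * y\<^sup>2 / 2) *\<^sub>R mat 1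
      = diag_mat (\<lambda>i. (z - y) * d i - \<epsilon> * z\<^sup>2 / 2 + \<epsilon> * y\<^sup>2 / 2)"
    by (simp add: \<Lambda>_base vec_eq_iff mat_def)
  then show ?thesis by (simp add: mexp_diag_mat evol_def)
qed

lemma TV_TW_system: "TV x z = system_V (Vof x) (Wof x) z" "TW x z = system_W (Vof x) (Wof x) z"
  unfolding TV_def TW_def system_V_def system_W_def mexp_evol0 mexp_evol
  by (simp_all add: flux_def[abs_def] force_def pert_def coef_def \<Lambda>_base)

lemma solution_of_fixed_point:
  assumes x: "x \<in> S" and fx: "T x = x"
  shows "is_solution (Vof x) (Wof x)"
  unfolding is_solution_def
proof (intro conjI ballI)
  fix z assume z: "z \<in> {0..L}"
  show "Vof x z = system_V (Vof x) (Wof x) z" "Wof x z = system_W (Vof x) (Wof x) z"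
    using T_components[OF x z] fx by (simp_all add: TV_TW_system)
  show "norm (Vof x z - Ubar) \<le> (1/2) * \<delta>" using Vof_bound[OF x z] by simp
  show "norm (Wof x z) \<le> cW * exp (- c * z / 2) * \<delta>" using Wof_bound[OF x z] by (simp add: mult_ac)
qed (auto intro: continuous_on_Vof continuous_on_Wof)

lemma fixed_point_of_solution:
  assumes sol: "is_solution V W"
  shows "encode V W \<in> S \<and> T (encode V W) = encode V W \<and>
         (\<forall>t\<in>{0..L}. Vof (encode V W) t = V t \<and> Wof (encode V W) t = W t)"
proof -
  have cV: "continuous_on {0..L} V" and cW: "continuous_on {0..L} W"
    and eqs: "\<And>t. t \<in> {0..L} \<Longrightarrow> V t = system_V V W t \<and> W t = system_W V W t"
    and bounds: "\<And>t. t \<in> {0..L} \<Longrightarrow> norm (V t - Ubar) \<le> (1/2) * \<delta> \<and> norm (W t) \<le> cW * exp (- c * t / 2) * \<delta>"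
    using sol unfolding is_solution_def by blast+
  note comps = encode_components[OF cV cW]
  have x: "encode V W \<in> S"
    using bounds by (intro encode_in_S cV cW) (auto simp: mult_ac)
  have "T (encode V W) = encode V W"
    unfolding T_def
  proof (rule encode_cong[OF continuous_on_TV[OF x] continuous_on_TW[OF x] cV cW])
    fix t assume t: "t \<in> {0..L}"
    show "TV (encode V W) t = V t" "TW (encode V W) t = W t"
      using eqs[OF t] system_cong[OF comps(1) comps(2) t] unfolding TV_TW_system by simp_all
  qed
  then show ?thesis using x comps by blast
qed

(* Two solutions encode fixed points in S, which coincide. *)
lemma solution_unique:
  assumes "is_solution V1 W1" "is_solution V2 W2" "\<zeta> \<in> {0..L}"
  shows "V1 \<zeta> = V2 \<zeta> \<and> W1 \<zeta> = W2 \<zeta>"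
  using fixed_point_of_solution[OF assms(1)] fixed_point_of_solution[OF assms(2)] unique_fixed_point assms(3)
  by metis

lemma solution_exists_unique: "uniquely_solvable \<delta> \<epsilon> U0 Wbar (1/2) cW"
proof -
  obtain x where "x \<in> S" "T x = x" using unique_fixed_point by blast
  then have "is_solution (Vof x) (Wof x)" by (rule solution_of_fixed_point)
  then show ?thesis
    unfolding uniquely_solvable_def Let_def L_def[symmetric] using solution_unique
    unfolding is_solution_def system_V_def system_W_def by blast
qed

end


context profile_coefficients
begin

lemma fixed_point_problemI:
  assumes "0 < \<delta>" "\<delta> < \<delta>\<^sub>0" "0 < \<epsilon>" "\<epsilon> \<le> \<delta>" "norm (U0 - Ubar) \<le> \<delta> / 4" "norm Wbar \<le> \<theta> * \<delta>"
  shows "fixed_point_problem c \<delta>\<^sub>1 Lp M Ubar \<Psi> \<Lambda> \<Upsilon> d \<delta> \<epsilon> Wbar U0"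
  using assms below_\<delta>\<^sub>0[OF assms(2)]
  by (intro fixed_point_problem.intro profile_coefficients_axioms fixed_point_problem_axioms.intro) auto

(* Lemma 3.2 for given coefficients: take cV = 1/2, and \<epsilon> so small that U\<^sup>\<epsilon> lies
   within \<delta>/4 of Ubar. *)
theorem solution_theorem:
  fixes Ueps :: "real \<Rightarrow> real^'n"
  assumes Ueps_lim: "(Ueps \<longlongrightarrow> Ubar) (at_right 0)"
  shows "\<exists>\<delta>\<^sub>0>0. \<forall>\<delta>. 0 < \<delta> \<and> \<delta> < \<delta>\<^sub>0 \<longrightarrow>
     (\<exists>cV \<theta> cW. 0 < cV \<and> cV < 1 \<and> 0 < \<theta> \<and> \<theta> < 1 \<and> 0 < cW \<and> cW < 1 \<and>
       (\<exists>\<epsilon>\<^sub>0>0. \<forall>\<epsilon>. 0 < \<epsilon> \<and> \<epsilon> < \<epsilon>\<^sub>0 \<longrightarrow>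
         (\<forall>Wbar. norm Wbar \<le> \<theta> * \<delta> \<longrightarrow> uniquely_solvable \<delta> \<epsilon> (Ueps \<epsilon>) Wbar cV cW)))"
proof (rule exI[of _ \<delta>\<^sub>0], intro conjI allI impI \<delta>\<^sub>0_pos)
  fix \<delta> assume \<delta>: "0 < \<delta> \<and> \<delta> < \<delta>\<^sub>0"
  have "\<forall>\<^sub>F e in at_right 0. dist (Ueps e) Ubar < \<delta> / 4"
    using tendstoD[OF Ueps_lim, of "\<delta> / 4"] \<delta> by simp
  then obtain b where b: "b > 0" "\<And>e. 0 < e \<Longrightarrow> e < b \<Longrightarrow> norm (Ueps e - Ubar) < \<delta> / 4"
    unfolding eventually_at_right_field dist_norm by auto
  have small_\<epsilon>: "\<exists>\<epsilon>\<^sub>0>0. \<forall>\<epsilon>. 0 < \<epsilon> \<and> \<epsilon> < \<epsilon>\<^sub>0 \<longrightarrow>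
          (\<forall>Wbar. norm Wbar \<le> \<theta> * \<delta> \<longrightarrow> uniquely_solvable \<delta> \<epsilon> (Ueps \<epsilon>) Wbar (1/2) cW)"
  proof (rule exI[of _ "min b \<delta>"], intro conjI allI impI)
    fix \<epsilon> and Wbar :: "real^'k"
    assume "0 < \<epsilon> \<and> \<epsilon> < min b \<delta>" "norm Wbar \<le> \<theta> * \<delta>"
    then interpret fixed_point_problem c \<delta>\<^sub>1 Lp M Ubar \<Psi> \<Lambda> \<Upsilon> d \<delta> \<epsilon> Wbar "Ueps \<epsilon>"
      using \<delta> b(2)[of \<epsilon>] by (intro fixed_point_problemI) auto
    show "uniquely_solvable \<delta> \<epsilon> (Ueps \<epsilon>) Wbar (1/2) cW"
      by (rule solution_exists_unique)
  qed (use b \<delta> in auto)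
  show "\<exists>cV \<theta> cW. 0 < cV \<and> cV < 1 \<and> 0 < \<theta> \<and> \<theta> < 1 \<and> 0 < cW \<and> cW < 1 \<and>
       (\<exists>\<epsilon>\<^sub>0>0. \<forall>\<epsilon>. 0 < \<epsilon> \<and> \<epsilon> < \<epsilon>\<^sub>0 \<longrightarrow>
         (\<forall>Wbar. norm Wbar \<le> \<theta> * \<delta> \<longrightarrow> uniquely_solvable \<delta> \<epsilon> (Ueps \<epsilon>) Wbar cV cW))"
  proof (rule exI[of _ "1/2"], rule exI[of _ \<theta>], rule exI[of _ cW], intro conjI)
    show "\<exists>\<epsilon>\<^sub>0>0. \<forall>\<epsilon>. 0 < \<epsilon> \<and> \<epsilon> < \<epsilon>\<^sub>0 \<longrightarrow>
          (\<forall>Wbar. norm Wbar \<le> \<theta> * \<delta> \<longrightarrow> uniquely_solvable \<delta> \<epsilon> (Ueps \<epsilon>) Wbar (1/2) cW)"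
      by (fact small_\<epsilon>)
  qed (use \<theta>_pos \<theta>_less_1 cW_pos cW_le_half in auto)
qed

end

lemma profile_coefficients_exist:
  fixes \<Psi> :: "real^'n \<Rightarrow> real^'k \<Rightarrow> real \<Rightarrow> real \<Rightarrow> real^'k^'n"
    and \<Lambda> \<Upsilon> :: "real^'n \<Rightarrow> real^'k \<Rightarrow> real \<Rightarrow> real \<Rightarrow> real^'k^'k"
  assumes c: "c > 0" and \<delta>\<^sub>1: "\<delta>\<^sub>1 > 0" and sub: "coef_box Ubar \<delta>\<^sub>1 \<subseteq> D"
    and \<Psi>: "smooth_on D (\<lambda>(V, W, \<xi>, e). \<Psi> V W \<xi> e)"
    and \<Lambda>: "smooth_on D (\<lambda>(V, W, \<xi>, e). \<Lambda> V W \<xi> e)"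
    and \<Upsilon>: "smooth_on D (\<lambda>(V, W, \<xi>, e). \<Upsilon> V W \<xi> e)"
    and "\<And>i. d i < - c" "\<Lambda> Ubar 0 0 0 = diag_mat d" "\<Upsilon> Ubar 0 0 0 = mat 1"
  shows "\<exists>Lp M. profile_coefficients c \<delta>\<^sub>1 Lp M Ubar \<Psi> \<Lambda> \<Upsilon> d"
proof -
  obtain B1 B2 B3 BM where B: "lipschitz_coef Ubar \<delta>\<^sub>1 B1 \<Psi>" "lipschitz_coef Ubar \<delta>\<^sub>1 B2 \<Lambda>"
      "lipschitz_coef Ubar \<delta>\<^sub>1 B3 \<Upsilon>" "\<forall>V W \<xi> e. in_box Ubar \<delta>\<^sub>1 V W \<xi> e \<longrightarrow> norm (\<Psi> V W \<xi> e) \<le> BM"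
    using smooth_lipschitz_coef[OF \<Psi> sub] smooth_lipschitz_coef[OF \<Lambda> sub]
      smooth_lipschitz_coef[OF \<Upsilon> sub] smooth_bounded_coef[OF \<Psi> sub] by metis
  let ?Lp = "max 1 (max B1 (max B2 B3))" and ?M = "max c BM"
  have "profile_coefficients c \<delta>\<^sub>1 ?Lp ?M Ubar \<Psi> \<Lambda> \<Upsilon> d"
    using assms B smooth_on_continuous_on[OF \<Psi> sub] smooth_on_continuous_on[OF \<Lambda> sub]
      smooth_on_continuous_on[OF \<Upsilon> sub]
    by unfold_locales (auto intro: lipschitz_coef_mono order_trans[OF _ max.cobounded2])
  then show ?thesis by blast
qed

theorem lemma3p2:
  fixes A :: "real^'n \<Rightarrow> real^'n^'n"
    and c :: real
    and Ubar :: "real^'n"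
    and \<delta>\<^sub>1 :: real
    and \<Psi> :: "real^'n \<Rightarrow> real^'k \<Rightarrow> real \<Rightarrow> real \<Rightarrow> real^'k^'n"
    and \<Lambda> :: "real^'n \<Rightarrow> real^'k \<Rightarrow> real \<Rightarrow> real \<Rightarrow> real^'k^'k"
    and \<Upsilon> :: "real^'n \<Rightarrow> real^'k \<Rightarrow> real \<Rightarrow> real \<Rightarrow> real^'k^'k"
    and D :: "((real^'n) \<times> (real^'k) \<times> real \<times> real) set"
    and Ueps :: "real \<Rightarrow> real^'n"
    and d :: "'k \<Rightarrow> real"
  assumes c_pos: "c > 0"
    and A_smooth: "smooth_on UNIV A"
    and A_hyp: "\<forall>U. hyperbolic_gap (A U) TYPE('k) c"
    and \<delta>\<^sub>1_pos: "\<delta>\<^sub>1 > 0"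
    and D_open: "open D"
    and D_box: "{(V, W, \<xi>, \<epsilon>). norm (V - Ubar) \<le> \<delta>\<^sub>1 \<and> norm W \<le> \<delta>\<^sub>1 \<and> \<bar>\<xi>\<bar> \<le> \<delta>\<^sub>1 \<and> \<bar>\<epsilon>\<bar> \<le> \<delta>\<^sub>1} \<subseteq> D"
    and \<Psi>_smooth: "smooth_on D (\<lambda>(V, W, \<xi>, \<epsilon>). \<Psi> V W \<xi> \<epsilon>)"
    and \<Lambda>_smooth: "smooth_on D (\<lambda>(V, W, \<xi>, \<epsilon>). \<Lambda> V W \<xi> \<epsilon>)"
    and \<Upsilon>_smooth: "smooth_on D (\<lambda>(V, W, \<xi>, \<epsilon>). \<Upsilon> V W \<xi> \<epsilon>)"
    and d_inj: "inj d"
    and d_range: "range d = {l\<in>real_eigenvalues (A Ubar). l < 0}"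
    and \<Lambda>_bar: "\<Lambda> Ubar 0 0 0 = diag_mat d"
    and \<Upsilon>_bar: "\<Upsilon> Ubar 0 0 0 = mat 1"
    and Ueps_lim: "(Ueps \<longlongrightarrow> Ubar) (at_right 0)"
  shows "\<exists>\<delta>\<^sub>0>0. \<forall>\<delta>. 0 < \<delta> \<and> \<delta> < \<delta>\<^sub>0 \<longrightarrow>
     (\<exists>cV \<theta> cW. 0 < cV \<and> cV < 1 \<and> 0 < \<theta> \<and> \<theta> < 1 \<and> 0 < cW \<and> cW < 1 \<and>
       (\<exists>\<epsilon>\<^sub>0>0. \<forall>\<epsilon>. 0 < \<epsilon> \<and> \<epsilon> < \<epsilon>\<^sub>0 \<longrightarrow>
         (\<forall>Wbar :: real^'k. norm Wbar \<le> \<theta> * \<delta> \<longrightarrow>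
           (let \<Lambda>b = \<Lambda> Ubar 0 0 0;
                L = \<delta> / \<epsilon>;
                sol = (\<lambda>(V :: real \<Rightarrow> real^'n) (W :: real \<Rightarrow> real^'k).
                  continuous_on {0..L} V \<and> continuous_on {0..L} W \<and>
                  (\<forall>\<zeta>\<in>{0..L}.
                     V \<zeta> = Ueps \<epsilon> - integral {\<zeta>..L}
                              (\<lambda>y. \<Psi> (V y) (W y) (\<epsilon> * y) \<epsilon> *v W y)) \<and>
                  (\<forall>\<zeta>\<in>{0..L}.
                     W \<zeta> = mexp (\<zeta> *\<^sub>R \<Lambda>b - (\<epsilon> * \<zeta>\<^sup>2 / 2) *\<^sub>R mat 1) *v Wbar
                       + integral {0..\<zeta>}
                          (\<lambda>y. mexp ((\<zeta> - y) *\<^sub>R \<Lambda>b - (\<epsilon> * \<zeta>\<^sup>2 / 2) *\<^sub>R mat 1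
                                      + (\<epsilon> * y\<^sup>2 / 2) *\<^sub>R mat 1)
                             *v (((\<Lambda> (V y) (W y) (\<epsilon> * y) \<epsilon> - \<Lambda>b)
                                  - (\<epsilon> * y) *\<^sub>R (\<Upsilon> (V y) (W y) (\<epsilon> * y) \<epsilon> - mat 1))
                                 *v W y))) \<and>
                  (\<forall>\<zeta>\<in>{0..L}. norm (V \<zeta> - Ubar) \<le> cV * \<delta> \<and>
                                 norm (W \<zeta>) \<le> cW * exp (- c * \<zeta> / 2) * \<delta>))
            in (\<exists>V W. sol V W) \<and>
               (\<forall>V1 W1 V2 W2. sol V1 W1 \<and> sol V2 W2 \<longrightarrow>
                  (\<forall>\<zeta>\<in>{0..L}. V1 \<zeta> = V2 \<zeta> \<and> W1 \<zeta> = W2 \<zeta>))))))"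
proof -
  (* The entries of \<Lambda> at the base point are the stable eigenvalues of A Ubar, hence below -c. *)
  have d_below: "d i < - c" for i
    using stable_eigenvalue_below_gap[of "A Ubar" c "d i"] A_hyp d_range c_pos by blast
  have "coef_box Ubar \<delta>\<^sub>1 \<subseteq> D"
    using D_box by (simp add: coef_box_def in_box_def)
  then obtain Lp M where coefficients: "profile_coefficients c \<delta>\<^sub>1 Lp M Ubar \<Psi> \<Lambda> \<Upsilon> d"
    using profile_coefficients_exist[OF c_pos \<delta>\<^sub>1_pos _ \<Psi>_smooth \<Lambda>_smooth \<Upsilon>_smooth d_below \<Lambda>_bar \<Upsilon>_bar]
    by blast
  show ?thesis
    using profile_coefficients.solution_theorem[OF coefficients Ueps_lim]
    unfolding profile_coefficients.uniquely_solvable_def[OF coefficients] .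
qed

end
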